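(* Let $(b_n)_{n\ge0}$ be a sequence with $b_n\in\{0,1\}$ for all $n$, and let $G(X)=\sum_{n=0}^\infty b_nX^n$. Then: (a) $(b_n)$ is eventually periodic if and only if $G(X)\in\mathbb{Q}(X)$; moreover, in this case there exist $P(X)\in\mathbb{Q}[X]$ and an integer $d\ge1$ such that $G(X)=\frac{P(X)}{1-X^d}$. (b) $(b_n)$ is not eventually periodic if and only if $G(X)$ is transcendental over $\mathbb{Q}(X)$.
   Context: A sequence $(s_n)_{n\ge0}$ is eventually periodic if there exist integers $N\ge0$ and $d\ge1$ such that $s_{n+d}=s_n$ for all $n\ge N$. Power series are regarded as elements of the field of formal Laurent series $\mathbb{C}((X))\supseteq\mathbb{Q}(X)$, and algebraicity/transcendence over $\mathbb{Q}(X)$ refers to this extension. *)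

theory Defs
  imports Complex_Main "HOL-Computational_Algebra.Formal_Laurent_Series" "HOL-Computational_Algebra.Polynomial_FPS"
begin

definition eventually_periodic :: "(nat \<Rightarrow> 'a) \<Rightarrow> bool" where
  "eventually_periodic s \<longleftrightarrow> (\<exists>N d. d \<ge> 1 \<and> (\<forall>n\<ge>N. s (n + d) = s n))"

definition poly_to_fls :: "rat poly \<Rightarrow> complex fls" where
  "poly_to_fls p = fps_to_fls (fps_of_poly (map_poly of_rat p))"

definition QX :: "complex fls set" where
  "QX = {poly_to_fls p / poly_to_fls q | p q. q \<noteq> 0}"

definition algebraic_over_QX :: "complex fls \<Rightarrow> bool" where
  "algebraic_over_QX f \<longleftrightarrow>
     (\<exists>(n::nat) (c::nat \<Rightarrow> complex fls). (\<forall>i\<le>n. c i \<in> QX) \<and> (\<exists>i\<le>n. c i \<noteq> 0)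
        \<and> (\<Sum>i\<le>n. c i * f ^ i) = 0)"

definition transcendental_over_QX :: "complex fls \<Rightarrow> bool" where
  "transcendental_over_QX f \<longleftrightarrow> \<not> algebraic_over_QX f"

definition gen_series :: "(nat \<Rightarrow> nat) \<Rightarrow> complex fls" where
  "gen_series b = fps_to_fls (Abs_fps (\<lambda>n. of_nat (b n)))"

end

theory Submission
  imports Defs "HOL-Analysis.FPS_Convergence"
begin

text \<open>
  If \<open>(b\<^sub>n)\<close> is eventually periodic with period \<open>d\<close>, then \<open>(1 - X\<^sup>d) G\<close> is a
  polynomial, which gives (a) and, trivially, algebraicity. Conversely, let
  \<open>\<Sum>i\<le>d. a\<^sub>i G\<^sup>i = 0\<close> with polynomials \<open>a\<^sub>i\<close> and \<open>a\<^sub>d \<noteq> 0\<close>. Cauchy's bound on the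
  roots of a polynomial shows that \<open>a\<^sub>d(z) G(z)\<close> is bounded on the unit disc, and its
  Taylor coefficients take only finitely many values, as those of \<open>G\<close> do. By Parseval's
  identity (over the \<open>N\<close>-th roots of unity) a power series bounded on the disc has
  square-summable coefficients, so \<open>a\<^sub>d G\<close> is a polynomial. The coefficients of \<open>G\<close>
  then satisfy a linear recurrence; since they take finitely many values, some window of
  consecutive values repeats, and from there on the sequence is periodic.
\<close>

unbundle no vec_syntax

lemma eventually_periodic_comp_inj:
  assumes "inj f"
  shows "eventually_periodic (\<lambda>n. f (s n)) \<longleftrightarrow> eventually_periodic s"
  unfolding eventually_periodic_def by (simp add: inj_eq[OF assms])

lemma eventually_periodic_if_finite_range_recurrence:
  fixes s :: "nat \<Rightarrow> 'a" and H :: "'a list \<Rightarrow> 'a"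
  assumes fin: "finite (range s)"
    and rec: "\<And>u. u \<ge> T \<Longrightarrow> s u = H (map s [u-k..<u])"
  shows "eventually_periodic s"
proof -
  \<comment> \<open>Pigeonhole on the windows of length \<open>k\<close>: two equal windows propagate forever.\<close>
  define w where "w t = map s [t..<t+k]" for t
  have "w ` {T..} \<subseteq> {xs. set xs \<subseteq> range s \<and> length xs = k}"
    by (auto simp: w_def)
  then have "finite (w ` {T..})"
    using fin by (rule finite_subset[OF _ finite_lists_length_eq])
  then have "\<not> inj_on w {T..}"
    using finite_imageD infinite_Ici by blast
  then obtain t1 t2 where t: "T \<le> t1" "t1 < t2" "w t1 = w t2"
    unfolding inj_on_def by (metis atLeast_iff linorder_neq_iff)
  have same: "s (t1 + j) = s (t2 + j)" for j
  proof (induction j rule: less_induct)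
    case (less j)
    show ?case
    proof (cases "j < k")
      case True
      then show ?thesis using arg_cong[OF t(3), of "\<lambda>xs. xs ! j"] by (simp add: w_def)
    next
      case False
      have "s (t1 + (j - k + i)) = s (t2 + (j - k + i))" if "i < k" for i
        using less.IH[of "j - k + i"] that False by simp
      then have "map s [t1+j-k..<t1+j] = map s [t2+j-k..<t2+j]"
        using False by (auto intro!: nth_equalityI simp: algebra_simps)
      then show ?thesis using rec[of "t1+j"] rec[of "t2+j"] t by simp
    qed
  qed
  show ?thesis unfolding eventually_periodic_def
  proof (intro exI conjI allI impI)
    fix n assume "n \<ge> t1"
    then show "s (n + (t2 - t1)) = s n"
      using same[of "n - t1"] t(2) by (simp add: algebra_simps)
  qed (use t in simp)
qed

lemma eventually_periodic_if_poly_mult_finite_support: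
  fixes f :: "'a::field fps"
  assumes q: "q \<noteq> 0"
    and supp: "finite {n. (fps_of_poly q * f) $ n \<noteq> 0}"
    and fin: "finite (range (fps_nth f))"
  shows "eventually_periodic (fps_nth f)"
proof -
  obtain T where T: "\<And>n. n \<ge> T \<Longrightarrow> (fps_of_poly q * f) $ n = 0"
    using supp unfolding MOST_iff_cofinite[symmetric] MOST_nat_le by auto
  define m where "m = (LEAST j. coeff q j \<noteq> 0)"
  define e where "e = degree q"
  define k where "k = e - m"
  have qe: "coeff q e \<noteq> 0" using q by (simp add: e_def)
  then have qm: "coeff q m \<noteq> 0" and "m \<le> e"
    unfolding m_def by (fact LeastI, fact Least_le)
  have below_m: "coeff q j = 0" if "j < m" for j
    using that not_less_Least unfolding m_def by blast
  have lowest: "coeff q m * f $ u = - (\<Sum>j=Suc m..e. coeff q j * f $ (u + m - j))"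
    if "u \<ge> T + k" for u
  proof -
    have "0 = (\<Sum>j=0..u+m. coeff q j * f $ (u + m - j))"
      using T[of "u + m"] that by (simp add: fps_mult_nth)
    also have "\<dots> = (\<Sum>j=m..e. coeff q j * f $ (u + m - j))"
      using that \<open>m \<le> e\<close> below_m coeff_eq_0[of q]
      by (intro sum.mono_neutral_right) (auto simp: k_def e_def not_le)
    also have "\<dots> = coeff q m * f $ u + (\<Sum>j=Suc m..e. coeff q j * f $ (u + m - j))"
      using \<open>m \<le> e\<close> by (simp add: sum.atLeast_Suc_atMost)
    finally show ?thesis by (simp add: eq_neg_iff_add_eq_0 add.commute)
  qed
  \<comment> \<open>Solving coefficient \<open>u + m\<close> of \<open>q f\<close> for its term at the lowest coefficient of \<open>q\<close>
    expresses \<open>f\<^sub>u\<close> through the \<open>k\<close> preceding coefficients.\<close>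
  define H where "H xs = - (\<Sum>j=Suc m..e. coeff q j * xs ! (e - j)) / coeff q m" for xs
  have "f $ u = H (map (fps_nth f) [u-k..<u])" if "u \<ge> T + k" for u
  proof -
    have "(\<Sum>j=Suc m..e. coeff q j * map (fps_nth f) [u-k..<u] ! (e - j))
        = (\<Sum>j=Suc m..e. coeff q j * f $ (u + m - j))"
      using that by (intro sum.cong) (auto simp: k_def)
    then show ?thesis using lowest[OF that] qm by (simp add: H_def field_simps)
  qed
  then show ?thesis using fin by (intro eventually_periodic_if_finite_range_recurrence) blast
qed

lemma finite_range_fps_nth_poly_mult:
  fixes f :: "'a::comm_semiring_1 fps"
  assumes fin: "finite (range (fps_nth f))"
  shows "finite (range (fps_nth (fps_of_poly p * f)))"
proof -
  define D where "D = degree p"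
  define F where "F w = (\<Sum>j\<le>D. coeff p j * w j)" for w
  define window where "window n = restrict (\<lambda>j. if j \<le> n then f $ (n - j) else 0) {..D}" for n
  have "(fps_of_poly p * f) $ n = F (window n)" for n
  proof -
    have "(fps_of_poly p * f) $ n = (\<Sum>j\<le>n + D. coeff p j * (if j \<le> n then f $ (n - j) else 0))"
      unfolding fps_mult_nth atLeast0AtMost
      by (rule sum.mono_neutral_cong_left) auto
    also have "\<dots> = F (window n)"
      unfolding F_def window_def D_def
      by (rule sum.mono_neutral_cong_right) (auto simp: coeff_eq_0)
    finally show ?thesis .
  qed
  moreover have "window n \<in> (\<Pi>\<^sub>E j\<in>{..D}. insert 0 (range (fps_nth f)))" for n
    by (auto simp: window_def)
  ultimately have "range (fps_nth (fps_of_poly p * f)) \<subseteq> F ` (\<Pi>\<^sub>E j\<in>{..D}. insert 0 (range (fps_nth f)))"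
    by blast
  then show ?thesis
    by (rule finite_subset) (intro finite_imageI finite_PiE, simp_all add: fin)
qed

lemma one_minus_monom_neq_0:
  assumes "d \<ge> 1"
  shows "(1 - monom 1 d :: 'a::comm_ring_1 poly) \<noteq> 0"
proof
  assume "(1 - monom 1 d :: 'a poly) = 0"
  then have "coeff (1 - monom 1 d :: 'a poly) 0 = 0"
    by simp
  with assms show False
    by simp
qed

lemma fps_of_poly_one_minus_monom_mult_nth:
  fixes f :: "'a::comm_ring_1 fps"
  shows "(fps_of_poly (1 - monom 1 d) * f) $ n = f $ n - (if d \<le> n then f $ (n - d) else 0)"
  by (simp add: fps_of_poly_diff fps_of_poly_monom' left_diff_distrib fps_X_power_mult_nth)

lemma sum_powers_root_of_unity:
  fixes N j :: nat
  assumes N: "N \<ge> 1"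
  defines "\<omega> \<equiv> exp (2 * of_real pi * \<i> / of_nat N)"
  shows "(\<Sum>k<N. (\<omega> ^ j) ^ k) = (if N dvd j then of_nat N else 0)"
proof -
  have \<omega>j: "\<omega> ^ j = exp (2 * of_real pi * \<i> * of_nat j / of_nat N)"
    by (simp add: \<omega>_def exp_of_nat_mult[symmetric] mult_ac)
  show ?thesis
  proof (cases "N dvd j")
    case True
    then have "\<omega> ^ j = 1"
      using N by (simp add: \<omega>j complex_root_unity_eq_1)
    with True show ?thesis
      by simp
  next
    case False
    then have "\<omega> ^ j \<noteq> 1"
      using N by (simp add: \<omega>j complex_root_unity_eq_1)
    moreover have "(\<omega> ^ j) ^ N = 1"
      using N by (simp add: \<omega>j complex_root_unity)
    ultimately show ?thesis
      using False by (simp add: geometric_sum)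
  qed
qed

lemma discrete_parseval:
  fixes a :: "nat \<Rightarrow> complex"
  assumes N: "N \<ge> 1"
  defines "\<omega> \<equiv> exp (2 * of_real pi * \<i> / of_nat N)"
  shows "(\<Sum>k<N. (norm (\<Sum>n<N. a n * \<omega> ^ (k * n)))\<^sup>2) = real N * (\<Sum>n<N. (norm (a n))\<^sup>2)"
proof -
  have "\<omega> * \<omega> ^ (N - 1) = 1"
    using complex_root_unity[of N 1] N by (cases N) (simp_all add: \<omega>_def)
  moreover have "cnj \<omega> * \<omega> = 1"
    by (simp add: \<omega>_def exp_cnj flip: exp_add)
  ultimately have cnj_\<omega>: "cnj \<omega> = \<omega> ^ (N - 1)"
    by (metis mult.assoc mult_1_left mult_1_right)
  have orth: "(\<Sum>k<N. (\<omega> ^ n * cnj \<omega> ^ m) ^ k) = (if n = m then of_nat N else 0)"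
    if "n < N" "m < N" for n m
  proof -
    have "int (n + (N - 1) * m) = (int n - int m) + int N * int m"
      using N by (simp add: left_diff_distrib)
    then have "N dvd n + (N - 1) * m \<longleftrightarrow> int N dvd int n - int m"
      by (metis dvd_add_left_iff dvd_triv_left of_nat_dvd_iff)
    also have "\<dots> \<longleftrightarrow> n = m"
      using that dvd_imp_le_int[of "int n - int m" "int N"]
      by (cases "n = m") (auto simp: abs_if split: if_split_asm)
    finally show ?thesis
      using sum_powers_root_of_unity[OF N, of "n + (N - 1) * m", folded \<omega>_def]
      by (simp add: cnj_\<omega> power_add power_mult)
  qed
  have power_k: "(\<omega> ^ n * cnj \<omega> ^ m) ^ k = \<omega> ^ (k * n) * cnj \<omega> ^ (k * m)" for k n m
    by (simp add: power_mult_distrib mult.commute flip: power_mult)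
  have "complex_of_real (\<Sum>k<N. (norm (\<Sum>n<N. a n * \<omega> ^ (k * n)))\<^sup>2)
      = (\<Sum>k<N. (\<Sum>n<N. a n * \<omega> ^ (k * n)) * cnj (\<Sum>m<N. a m * \<omega> ^ (k * m)))"
    unfolding of_real_sum complex_norm_square ..
  also have "\<dots> = (\<Sum>k<N. \<Sum>n<N. \<Sum>m<N. a n * cnj (a m) * (\<omega> ^ n * cnj \<omega> ^ m) ^ k)"
    by (simp add: sum_product power_k mult_ac)
  also have "\<dots> = (\<Sum>n<N. \<Sum>m<N. a n * cnj (a m) * (\<Sum>k<N. (\<omega> ^ n * cnj \<omega> ^ m) ^ k))"
    by (subst sum.swap, rule sum.cong[OF refl], subst sum.swap, simp add: sum_distrib_left)
  also have "\<dots> = (\<Sum>n<N. a n * cnj (a n) * of_nat N)"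
  proof (rule sum.cong[OF refl])
    fix n assume "n \<in> {..<N}"
    then have "(\<Sum>m<N. a n * cnj (a m) * (\<Sum>k<N. (\<omega> ^ n * cnj \<omega> ^ m) ^ k))
        = (\<Sum>m<N. if n = m then a n * cnj (a n) * of_nat N else 0)"
      by (intro sum.cong) (auto simp: orth)
    with \<open>n \<in> {..<N}\<close> show "(\<Sum>m<N. a n * cnj (a m) * (\<Sum>k<N. (\<omega> ^ n * cnj \<omega> ^ m) ^ k))
        = a n * cnj (a n) * of_nat N"
      by simp
  qed
  also have "\<dots> = complex_of_real (real N * (\<Sum>n<N. (norm (a n))\<^sup>2))"
    unfolding of_real_mult of_real_sum complex_norm_square by (simp add: sum_distrib_left mult_ac)
  finally show ?thesis
    by (simp only: of_real_eq_iff)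
qed

lemma norm_sum_lessThan_powser_le:
  fixes c :: "nat \<Rightarrow> 'a::{banach, real_normed_div_algebra}"
  assumes C: "\<And>n. norm (c n) \<le> C" and z: "norm z < 1"
  shows "norm (\<Sum>n<N. c n * z ^ n) \<le> norm (\<Sum>n. c n * z ^ n) + C * norm z ^ N / (1 - norm z)"
proof -
  have term_le: "norm (c n * z ^ n) \<le> C * norm z ^ n" for n
    using C[of n] by (simp add: norm_mult norm_power mult_right_mono)
  have geom: "summable (\<lambda>n. C * norm z ^ n)"
    using z by (simp add: summable_geometric)
  have norm_summable: "summable (\<lambda>n. norm (c n * z ^ n))"
    by (rule summable_comparison_test[OF _ geom]) (use term_le in auto)
  have tail_le: "norm (\<Sum>n. c (n + N) * z ^ (n + N)) \<le> C * norm z ^ N / (1 - norm z)"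
  proof -
    have "norm (\<Sum>n. c (n + N) * z ^ (n + N)) \<le> (\<Sum>n. norm (c (n + N) * z ^ (n + N)))"
      using summable_ignore_initial_segment[OF norm_summable] by (rule summable_norm)
    also have "\<dots> \<le> (\<Sum>n. C * norm z ^ N * norm z ^ n)"
    proof (rule suminf_le)
      show "norm (c (n + N) * z ^ (n + N)) \<le> C * norm z ^ N * norm z ^ n" for n
        using term_le[of "n + N"] by (simp add: power_add mult_ac)
      show "summable (\<lambda>n. C * norm z ^ N * norm z ^ n)"
        using z by (intro summable_mult summable_geometric) simp
    qed (use summable_ignore_initial_segment[OF norm_summable] in simp)
    also have "\<dots> = C * norm z ^ N / (1 - norm z)"
      using z by (simp add: suminf_mult suminf_geometric summable_geometric divide_simps)
    finally show ?thesis .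
  qed
  have "(\<Sum>n<N. c n * z ^ n) = (\<Sum>n. c n * z ^ n) - (\<Sum>n. c (n + N) * z ^ (n + N))"
    using suminf_split_initial_segment[OF summable_norm_cancel[OF norm_summable], of N] by simp
  then have "norm (\<Sum>n<N. c n * z ^ n)
      \<le> norm (\<Sum>n. c n * z ^ n) + norm (\<Sum>n. c (n + N) * z ^ (n + N))"
    by (simp add: norm_triangle_ineq4)
  with tail_le show ?thesis
    by linarith
qed

lemma weighted_sum_norm_fps_nth_square_le:
  fixes g :: "complex fps"
  assumes C: "\<And>n. norm (g $ n) \<le> C"
    and M: "\<And>z. norm z < 1 \<Longrightarrow> norm (eval_fps g z) \<le> M"
    and r: "0 \<le> r" "r < 1"
  shows "(\<Sum>n<N. (norm (g $ n))\<^sup>2 * r ^ (2 * n)) \<le> (M + C * r ^ N / (1 - r))\<^sup>2"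
proof (cases "N = 0")
  case False
  then have N: "N \<ge> 1" by simp
  \<comment> \<open>Parseval for the coefficients \<open>g\<^sub>n r\<^sup>n\<close>, whose discrete Fourier transform is the
    truncated series evaluated at the points \<open>r \<omega>\<^sup>k\<close>.\<close>
  define \<omega> where "\<omega> = exp (2 * of_real pi * \<i> / of_nat N)"
  define bound where "bound = M + C * r ^ N / (1 - r)"
  have each: "norm (\<Sum>n<N. (g $ n * of_real r ^ n) * \<omega> ^ (k * n)) \<le> bound" for k
  proof -
    define z where "z = of_real r * \<omega> ^ k"
    have "norm z = r"
      using r by (simp add: z_def \<omega>_def norm_mult norm_power)
    then have "norm (\<Sum>n<N. g $ n * z ^ n) \<le> bound"
      using norm_sum_lessThan_powser_le[of "fps_nth g" C z N] C M[of z] r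
      by (simp add: bound_def eval_fps_def)
    moreover have "(\<Sum>n<N. g $ n * z ^ n) = (\<Sum>n<N. (g $ n * of_real r ^ n) * \<omega> ^ (k * n))"
      by (simp add: z_def power_mult_distrib power_mult mult.assoc)
    ultimately show ?thesis by simp
  qed
  have "(\<Sum>k<N. (norm (\<Sum>n<N. (g $ n * of_real r ^ n) * \<omega> ^ (k * n)))\<^sup>2)
      \<le> (\<Sum>k<N. bound\<^sup>2)"
    by (intro sum_mono power_mono each norm_ge_zero)
  then have "(\<Sum>k<N. (norm (\<Sum>n<N. (g $ n * of_real r ^ n) * \<omega> ^ (k * n)))\<^sup>2)
      \<le> real N * bound\<^sup>2"
    by simp
  then have "real N * (\<Sum>n<N. (norm (g $ n * of_real r ^ n))\<^sup>2) \<le> real N * bound\<^sup>2"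
    unfolding \<omega>_def discrete_parseval[OF N] .
  then show ?thesis
    using N r by (simp add: bound_def norm_mult norm_power power_mult_distrib power_mult mult.commute)
qed (use power2_eq_square in simp)

lemma sum_norm_fps_nth_square_le:
  fixes g :: "complex fps"
  assumes C: "\<And>n. norm (g $ n) \<le> C"
    and M: "\<And>z. norm z < 1 \<Longrightarrow> norm (eval_fps g z) \<le> M"
  shows "(\<Sum>n<K. (norm (g $ n))\<^sup>2) \<le> M\<^sup>2"
proof -
  \<comment> \<open>Let first \<open>N \<rightarrow> \<infinity>\<close>, then \<open>r \<rightarrow> 1\<close>.\<close>
  have weighted: "(\<Sum>n<K. (norm (g $ n))\<^sup>2 * r ^ (2 * n)) \<le> M\<^sup>2" if r: "0 < r" "r < 1" for r
  proof (rule LIMSEQ_le_const)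
    show "(\<lambda>N. (M + C * r ^ N / (1 - r))\<^sup>2) \<longlonglongrightarrow> M\<^sup>2"
      using r by (auto intro!: tendsto_eq_intros LIMSEQ_power_zero)
    have "(\<Sum>n<K. (norm (g $ n))\<^sup>2 * r ^ (2 * n)) \<le> (M + C * r ^ N / (1 - r))\<^sup>2"
      if "N \<ge> K" for N
    proof -
      have "(\<Sum>n<K. (norm (g $ n))\<^sup>2 * r ^ (2 * n)) \<le> (\<Sum>n<N. (norm (g $ n))\<^sup>2 * r ^ (2 * n))"
        using that r by (intro sum_mono2) auto
      also have "\<dots> \<le> (M + C * r ^ N / (1 - r))\<^sup>2"
        using r by (intro weighted_sum_norm_fps_nth_square_le C M) auto
      finally show ?thesis .
    qed
    then show "\<exists>N. \<forall>n\<ge>N. (\<Sum>n<K. (norm (g $ n))\<^sup>2 * r ^ (2 * n)) \<le> (M + C * r ^ n / (1 - r))\<^sup>2"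
      by blast
  qed
  have "((\<lambda>r. \<Sum>n<K. (norm (g $ n))\<^sup>2 * r ^ (2 * n)) \<longlongrightarrow> (\<Sum>n<K. (norm (g $ n))\<^sup>2 * 1 ^ (2 * n)))
      (at_left 1)"
    by (intro tendsto_intros)
  then show ?thesis
    using eventually_at_left_real[of 0 "1::real"] weighted
    by (intro tendsto_upperbound[where F = "at_left (1::real)"]) (auto elim: eventually_mono)
qed

lemma finite_support_if_finite_range_bounded:
  fixes g :: "complex fps"
  assumes fin: "finite (range (fps_nth g))"
    and M: "\<And>z. norm z < 1 \<Longrightarrow> norm (eval_fps g z) \<le> M"
  shows "finite {n. g $ n \<noteq> 0}"
proof -
  define C where "C = Max (norm ` range (fps_nth g))"
  have C: "norm (g $ n) \<le> C" for n
    unfolding C_def using fin by (intro Max_ge) auto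
  have "summable (\<lambda>n. (norm (g $ n))\<^sup>2)"
    using sum_norm_fps_nth_square_le[OF C M] by (intro summableI_nonneg_bounded) auto
  from tendsto_real_sqrt[OF summable_LIMSEQ_zero[OF this]]
  have "(\<lambda>n. norm (g $ n)) \<longlonglongrightarrow> 0"
    by simp
  then have "(\<lambda>n. g $ n) \<longlonglongrightarrow> 0"
    by (simp only: tendsto_norm_zero_iff)
  \<comment> \<open>\<open>0\<close> is isolated among the finitely many values of the coefficients.\<close>
  moreover have "open (- (range (fps_nth g) - {0}))"
    using fin by (intro open_Compl finite_imp_closed) simp
  ultimately have "eventually (\<lambda>n. g $ n \<in> - (range (fps_nth g) - {0})) sequentially"
    by (rule topological_tendstoD) simp
  then have "eventually (\<lambda>n. g $ n = 0) cofinite"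
    by (simp add: cofinite_eq_sequentially)
  then show ?thesis
    by (simp add: eventually_cofinite)
qed

lemma norm_lead_coeff_mult_root_le:
  fixes w :: "nat \<Rightarrow> 'a::real_normed_field"
  assumes root: "(\<Sum>i\<le>d. w i * y ^ i) = 0"
  shows "norm (w d * y) \<le> (\<Sum>i\<le>d. norm (w i))"
proof (cases "norm y \<le> 1")
  case True
  then have "norm (w d * y) \<le> norm (w d)"
    by (simp add: norm_mult mult_left_le)
  also have "\<dots> \<le> (\<Sum>i\<le>d. norm (w i))"
    by (rule member_le_sum) auto
  finally show ?thesis .
next
  case False
  show ?thesis
  proof (cases d)
    case 0
    then show ?thesis
      using root by simp
  next
    case (Suc e)
    have "(\<Sum>i<d. w i * y ^ i) + w d * y ^ d = 0"
      using root unfolding Suc sum.atMost_Suc lessThan_Suc_atMost .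
    then have lead: "w d * y ^ d = - (\<Sum>i<d. w i * y ^ i)"
      by (simp add: eq_neg_iff_add_eq_0 add.commute)
    have "norm (w d) * norm y * norm y ^ e = norm (w d * y ^ d)"
      by (simp add: Suc norm_mult norm_power mult_ac)
    also have "\<dots> = norm (\<Sum>i<d. w i * y ^ i)"
      by (simp only: lead norm_minus_cancel)
    also have "\<dots> \<le> (\<Sum>i<d. norm (w i) * norm y ^ e)"
    proof (rule order_trans[OF norm_sum sum_mono])
      fix i assume "i \<in> {..<d}"
      then have "norm y ^ i \<le> norm y ^ e"
        using False Suc by (intro power_increasing) auto
      then show "norm (w i * y ^ i) \<le> norm (w i) * norm y ^ e"
        by (simp add: norm_mult norm_power mult_left_mono)
    qed
    also have "\<dots> = (\<Sum>i<d. norm (w i)) * norm y ^ e"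
      by (simp add: sum_distrib_right)
    finally have "norm (w d) * norm y * norm y ^ e \<le> (\<Sum>i<d. norm (w i)) * norm y ^ e" .
    moreover have "norm y ^ e > 0"
      using False by (intro zero_less_power) linarith
    ultimately have "norm (w d) * norm y \<le> (\<Sum>i<d. norm (w i))"
      by (simp add: mult_le_cancel_right)
    also have "\<dots> \<le> (\<Sum>i\<le>d. norm (w i))"
      by (intro sum_mono2) auto
    finally show ?thesis
      by (simp add: norm_mult)
  qed
qed

lemma norm_poly_le_sum_norm_coeff:
  fixes p :: "'a::real_normed_field poly"
  assumes "norm z \<le> 1"
  shows "norm (poly p z) \<le> (\<Sum>i\<le>degree p. norm (coeff p i))"
proof -
  have "norm (poly p z) \<le> (\<Sum>i\<le>degree p. norm (coeff p i * z ^ i))"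
    unfolding poly_altdef by (rule norm_sum)
  also have "\<dots> \<le> (\<Sum>i\<le>degree p. norm (coeff p i))"
    using assms by (intro sum_mono) (simp add: norm_mult norm_power mult_left_le power_le_one)
  finally show ?thesis .
qed

lemma fps_conv_radius_ge_1_if_bounded:
  fixes f :: "'a::{banach, real_normed_div_algebra} fps"
  assumes "\<And>n. norm (f $ n) \<le> C"
  shows "fps_conv_radius f \<ge> 1"
  unfolding fps_conv_radius_def
proof (rule conv_radius_geI_ex')
  fix r :: real
  assume r: "0 < r" "ereal r < 1"
  show "summable (\<lambda>n. f $ n * of_real r ^ n)"
  proof (rule summable_comparison_test)
    show "summable (\<lambda>n. C * r ^ n)"
      using r by (intro summable_mult summable_geometric) simp
    show "\<exists>N. \<forall>n\<ge>N. norm (f $ n * of_real r ^ n) \<le> C * r ^ n"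
      using r assms by (auto simp: norm_mult norm_power intro: mult_right_mono)
  qed
qed

lemma fps_conv_radius_sum:
  fixes F :: "'b \<Rightarrow> 'a::{banach, real_normed_div_algebra} fps"
  assumes "\<And>i. i \<in> A \<Longrightarrow> R \<le> fps_conv_radius (F i)"
  shows "R \<le> fps_conv_radius (\<Sum>i\<in>A. F i)"
  using assms
proof (induction A rule: infinite_finite_induct)
  case (insert i A)
  then have "R \<le> min (fps_conv_radius (F i)) (fps_conv_radius (\<Sum>i\<in>A. F i))"
    by simp
  also have "\<dots> \<le> fps_conv_radius (F i + (\<Sum>i\<in>A. F i))"
    by (rule fps_conv_radius_add)
  finally show ?case
    using insert.hyps by simp
qed simp_all

lemma eval_fps_sum:
  fixes F :: "'b \<Rightarrow> 'a::{banach, real_normed_div_algebra} fps"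
  assumes "\<And>i. i \<in> A \<Longrightarrow> R \<le> fps_conv_radius (F i)" and "ereal (norm z) < R"
  shows "eval_fps (\<Sum>i\<in>A. F i) z = (\<Sum>i\<in>A. eval_fps (F i) z)"
  using assms
proof (induction A rule: infinite_finite_induct)
  case (insert i A)
  have "ereal (norm z) < fps_conv_radius (\<Sum>i\<in>A. F i)"
    using insert.prems fps_conv_radius_sum[of A R F] by (auto intro: less_le_trans)
  moreover have "ereal (norm z) < fps_conv_radius (F i)"
    using insert.prems by (auto intro: less_le_trans)
  ultimately show ?case
    using insert by (simp add: eval_fps_add)
qed simp_all

lemma poly_mult_finite_support_if_algebraic:
  fixes f :: "complex fps" and a :: "nat \<Rightarrow> complex poly"
  assumes fin: "finite (range (fps_nth f))"
    and rel: "(\<Sum>i\<le>n. fps_of_poly (a i) * f ^ i) = 0"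
    and nz: "\<exists>i\<le>n. a i \<noteq> 0"
  obtains p where "p \<noteq> 0" "finite {m. (fps_of_poly p * f) $ m \<noteq> 0}"
proof -
  define d where "d = Max {i\<in>{..n}. a i \<noteq> 0}"
  have "d \<in> {i\<in>{..n}. a i \<noteq> 0}"
    unfolding d_def using nz by (intro Max_in) auto
  then have d: "d \<le> n" "a d \<noteq> 0" by auto
  have above_d: "a i = 0" if "d < i" "i \<le> n" for i
  proof (rule ccontr)
    assume "a i \<noteq> 0"
    then have "i \<le> d"
      unfolding d_def using that by (intro Max_ge) auto
    with that show False by simp
  qed
  have "(\<Sum>i\<le>d. fps_of_poly (a i) * f ^ i) = (\<Sum>i\<le>n. fps_of_poly (a i) * f ^ i)"
    using d above_d by (intro sum.mono_neutral_left) auto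
  with rel have rel_d: "(\<Sum>i\<le>d. fps_of_poly (a i) * f ^ i) = 0"
    by simp
  define C where "C = Max (norm ` range (fps_nth f))"
  have "norm (f $ m) \<le> C" for m
    unfolding C_def using fin by (intro Max_ge) auto
  then have radius: "1 \<le> fps_conv_radius f"
    by (rule fps_conv_radius_ge_1_if_bounded)
  have z_radius: "ereal (norm z) < fps_conv_radius f" if "norm z < 1" for z :: complex
    using that radius by (metis ereal_less(3) less_le_trans)
  have radius_i: "fps_conv_radius f \<le> fps_conv_radius (fps_of_poly (a i) * f ^ i)" for i
    using fps_conv_radius_mult[of "fps_of_poly (a i)" "f ^ i"] fps_conv_radius_power[of f i]
    by (simp add: min_def split: if_splits)
  have root: "(\<Sum>i\<le>d. poly (a i) z * eval_fps f z ^ i) = 0" if "norm z < 1" for z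
  proof -
    have "0 = eval_fps (\<Sum>i\<le>d. fps_of_poly (a i) * f ^ i) z"
      using rel_d by simp
    also have "\<dots> = (\<Sum>i\<le>d. eval_fps (fps_of_poly (a i) * f ^ i) z)"
      using radius_i z_radius[OF that] by (rule eval_fps_sum)
    also have "\<dots> = (\<Sum>i\<le>d. poly (a i) z * eval_fps f z ^ i)"
      using z_radius[OF that] fps_conv_radius_power[of f]
      by (simp add: eval_fps_mult eval_fps_power less_le_trans)
    finally show ?thesis by simp
  qed
  define g where "g = fps_of_poly (a d) * f"
  define B where "B = (\<Sum>i\<le>d. \<Sum>j\<le>degree (a i). norm (coeff (a i) j))"
  have "norm (eval_fps g z) \<le> B" if "norm z < 1" for z
  proof -
    have "norm (eval_fps g z) = norm (poly (a d) z * eval_fps f z)"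
      unfolding g_def using z_radius[OF that] by (simp add: eval_fps_mult)
    also have "\<dots> \<le> (\<Sum>i\<le>d. norm (poly (a i) z))"
      using root[OF that] by (rule norm_lead_coeff_mult_root_le)
    also have "\<dots> \<le> B"
      unfolding B_def using that by (intro sum_mono norm_poly_le_sum_norm_coeff) simp
    finally show ?thesis .
  qed
  moreover have "finite (range (fps_nth g))"
    unfolding g_def using fin by (rule finite_range_fps_nth_poly_mult)
  ultimately have "finite {m. g $ m \<noteq> 0}"
    by (intro finite_support_if_finite_range_bounded)
  with d(2) show ?thesis
    using that by (simp add: g_def)
qed

lemma map_poly_of_rat_mult:
  "map_poly of_rat (p * q) = (map_poly of_rat p * map_poly of_rat q :: 'a::field_char_0 poly)"
  by (rule poly_eqI) (simp add: coeff_map_poly coeff_mult of_rat_sum of_rat_mult)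

lemma map_poly_of_rat_one_minus_monom:
  "map_poly of_rat (1 - monom 1 d :: rat poly) = (1 - monom 1 d :: 'a::field_char_0 poly)"
  by (rule poly_eqI) (simp add: coeff_map_poly)

lemma fps_to_fls_sum: "fps_to_fls (\<Sum>i\<in>A. f i) = (\<Sum>i\<in>A. fps_to_fls (f i))"
  by (induction A rule: infinite_finite_induct) simp_all

lemma poly_to_fls_mult_fps_to_fls:
  "poly_to_fls p * fps_to_fls f = fps_to_fls (fps_of_poly (map_poly of_rat p) * f)"
  by (simp add: poly_to_fls_def fls_times_fps_to_fls)

lemma poly_to_fls_mult: "poly_to_fls (p * q) = poly_to_fls p * poly_to_fls q"
  by (simp add: poly_to_fls_def map_poly_of_rat_mult fps_of_poly_mult fls_times_fps_to_fls)

lemma poly_to_fls_uminus: "poly_to_fls (- p) = - poly_to_fls p"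
proof -
  have "map_poly of_rat (- p) = (- map_poly of_rat p :: complex poly)"
    by (rule poly_eqI) (simp add: coeff_map_poly of_rat_minus)
  then show ?thesis
    by (simp add: poly_to_fls_def fps_of_poly_uminus)
qed

lemma poly_to_fls_eq_0_iff [simp]: "poly_to_fls p = 0 \<longleftrightarrow> p = 0"
proof -
  have "fps_of_poly q = 0 \<longleftrightarrow> q = 0" for q :: "complex poly"
    using fps_of_poly_eq_iff[of q 0] by simp
  then show ?thesis
    by (simp add: poly_to_fls_def map_poly_eq_0_iff)
qed

lemma in_QX_imp_algebraic_over_QX:
  assumes "f \<in> QX"
  shows "algebraic_over_QX f"
proof -
  obtain p q where q: "q \<noteq> 0" and f: "f = poly_to_fls p / poly_to_fls q"
    using assms by (auto simp: QX_def)
  define c :: "nat \<Rightarrow> complex fls" where "c i = (if i = 0 then - f else 1)" for i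
  have "c 0 = poly_to_fls (- p) / poly_to_fls q"
    by (simp add: c_def f poly_to_fls_uminus)
  moreover have "c 1 = poly_to_fls 1 / poly_to_fls 1"
    by (simp add: c_def poly_to_fls_def)
  ultimately have "\<forall>i\<le>1. c i \<in> QX"
    using q unfolding QX_def by (auto simp: le_Suc_eq)
  moreover have "(\<Sum>i\<le>1. c i * f ^ i) = 0"
    by (simp add: c_def)
  ultimately show ?thesis
    unfolding algebraic_over_QX_def by (intro exI[of _ 1] exI[of _ c]) (auto simp: c_def)
qed

lemma algebraic_over_QX_imp_poly_relation:
  assumes "algebraic_over_QX f"
  obtains n and a :: "nat \<Rightarrow> rat poly"
  where "\<exists>i\<le>n. a i \<noteq> 0" and "(\<Sum>i\<le>n. poly_to_fls (a i) * f ^ i) = 0"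
proof -
  obtain n c where cQ: "\<forall>i\<le>n. c i \<in> QX" and "\<exists>i\<le>n. c i \<noteq> 0"
    and rel: "(\<Sum>i\<le>n. c i * f ^ i) = 0"
    using assms unfolding algebraic_over_QX_def by blast
  then obtain i0 where i0: "i0 \<le> n" "c i0 \<noteq> 0" by blast
  have "\<forall>i. \<exists>p q. i \<le> n \<longrightarrow> q \<noteq> 0 \<and> c i = poly_to_fls p / poly_to_fls q"
    using cQ unfolding QX_def by blast
  then obtain p q where q: "\<And>i. i \<le> n \<Longrightarrow> q i \<noteq> 0"
    and c: "\<And>i. i \<le> n \<Longrightarrow> c i = poly_to_fls (p i) / poly_to_fls (q i)"
    by metis
  define D where "D = (\<Prod>i\<le>n. q i)"
  define a where "a i = p i * (\<Prod>j\<in>{..n}-{i}. q j)" for i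
  have a: "poly_to_fls (a i) = c i * poly_to_fls D" if "i \<le> n" for i
  proof -
    have "D = q i * (\<Prod>j\<in>{..n}-{i}. q j)"
      unfolding D_def using that by (simp add: prod.remove)
    then show ?thesis
      using c[OF that] q[OF that] by (simp add: a_def poly_to_fls_mult)
  qed
  have "D \<noteq> 0"
    using q by (simp add: D_def)
  then have "poly_to_fls (a i0) \<noteq> 0"
    using a[OF i0(1)] i0(2) by simp
  then have "a i0 \<noteq> 0"
    by auto
  moreover have "(\<Sum>i\<le>n. poly_to_fls (a i) * f ^ i) = (\<Sum>i\<le>n. c i * f ^ i) * poly_to_fls D"
    by (simp add: a sum_distrib_left mult_ac)
  ultimately show ?thesis
    using that i0(1) rel by auto
qed

lemma gen_series_eq_quotient_if_eventually_periodic: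
  assumes "eventually_periodic b"
  shows "\<exists>P d. d \<ge> 1 \<and> gen_series b = poly_to_fls P / poly_to_fls (1 - monom 1 d)"
proof -
  obtain N d where d: "d \<ge> 1" and per: "\<And>n. n \<ge> N \<Longrightarrow> b (n + d) = b n"
    using assms unfolding eventually_periodic_def by blast
  define P :: "rat poly" where
    "P = Poly (map (\<lambda>n. of_nat (b n) - (if d \<le> n then of_nat (b (n - d)) else 0)) [0..<N+d])"
  define B :: "complex fps" where "B = Abs_fps (\<lambda>n. of_nat (b n))"
  have "fps_of_poly (1 - monom 1 d) * B = fps_of_poly (map_poly of_rat P)"
  proof (rule fps_ext)
    fix n
    show "(fps_of_poly (1 - monom 1 d) * B) $ n = fps_of_poly (map_poly of_rat P) $ n"
    proof (cases "n < N + d")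
      case True
      then show ?thesis
        by (simp add: fps_of_poly_one_minus_monom_mult_nth B_def P_def coeff_map_poly
            nth_default_nth of_rat_diff)
    next
      case False
      then have "b n = b (n - d)"
        using per[of "n - d"] by simp
      with False show ?thesis
        by (simp add: fps_of_poly_one_minus_monom_mult_nth B_def P_def coeff_map_poly
            nth_default_beyond)
    qed
  qed
  then have eq: "poly_to_fls (1 - monom 1 d) * gen_series b = poly_to_fls P"
    by (simp add: gen_series_def B_def poly_to_fls_mult_fps_to_fls map_poly_of_rat_one_minus_monom
        poly_to_fls_def flip: fls_times_fps_to_fls)
  have "poly_to_fls (1 - monom 1 d) \<noteq> 0"
    unfolding poly_to_fls_eq_0_iff by (rule one_minus_monom_neq_0[OF d])
  then have "gen_series b = poly_to_fls P / poly_to_fls (1 - monom 1 d)"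
    by (subst eq[symmetric]) (rule nonzero_mult_div_cancel_left[symmetric])
  with d show ?thesis
    by blast
qed

lemma eventually_periodic_if_algebraic_over_QX:
  assumes fin: "finite (range b)" and alg: "algebraic_over_QX (gen_series b)"
  shows "eventually_periodic b"
proof -
  obtain n and a :: "nat \<Rightarrow> rat poly" where nz: "\<exists>i\<le>n. a i \<noteq> 0"
    and rel: "(\<Sum>i\<le>n. poly_to_fls (a i) * gen_series b ^ i) = 0"
    using alg by (rule algebraic_over_QX_imp_poly_relation)
  define B :: "complex fps" where "B = Abs_fps (\<lambda>n. of_nat (b n))"
  have B_nth: "fps_nth B = (\<lambda>n. of_nat (b n))"
    by (simp add: B_def fun_eq_iff)
  have fin_B: "finite (range (fps_nth B))"
    using fin by (simp add: B_nth finite_range_imageI)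
  have "fps_to_fls (\<Sum>i\<le>n. fps_of_poly (map_poly of_rat (a i)) * B ^ i) = 0"
    using rel by (simp add: fps_to_fls_sum poly_to_fls_mult_fps_to_fls gen_series_def B_def
        flip: fps_to_fls_power)
  then have rel_B: "(\<Sum>i\<le>n. fps_of_poly (map_poly of_rat (a i)) * B ^ i) = 0"
    by simp
  have "\<exists>i\<le>n. map_poly (of_rat :: rat \<Rightarrow> complex) (a i) \<noteq> 0"
    using nz by (simp add: map_poly_eq_0_iff)
  with fin_B rel_B obtain p where "p \<noteq> 0" "finite {m. (fps_of_poly p * B) $ m \<noteq> 0}"
    by (rule poly_mult_finite_support_if_algebraic)
  then have "eventually_periodic (fps_nth B)"
    using fin_B by (rule eventually_periodic_if_poly_mult_finite_support)
  then show ?thesis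
    by (simp add: B_nth eventually_periodic_comp_inj[OF inj_of_nat])
qed

theorem corollary2p5:
  fixes b :: "nat \<Rightarrow> nat"
  assumes "\<forall>n. b n \<in> {0, 1}"
  shows "(eventually_periodic b \<longleftrightarrow> gen_series b \<in> QX)
       \<and> (eventually_periodic b \<longrightarrow>
            (\<exists>(P::rat poly) (d::nat). d \<ge> 1 \<and>
               gen_series b = poly_to_fls P / poly_to_fls (1 - monom 1 d)))
       \<and> (\<not> eventually_periodic b \<longleftrightarrow> transcendental_over_QX (gen_series b))"
proof -
  have "range b \<subseteq> {0, 1}"
    using assms by (simp add: image_subset_iff)
  then have fin: "finite (range b)"
    by (rule finite_subset) simp
  have QX_if_periodic: "gen_series b \<in> QX" if per: "eventually_periodic b"
  proof -
    obtain P d where "d \<ge> 1" "gen_series b = poly_to_fls P / poly_to_fls (1 - monom 1 d)"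
      using gen_series_eq_quotient_if_eventually_periodic[OF per] by blast
    then show ?thesis
      unfolding QX_def using one_minus_monom_neq_0[of d] by blast
  qed
  have "eventually_periodic b \<longleftrightarrow> gen_series b \<in> QX"
    and "eventually_periodic b \<longleftrightarrow> algebraic_over_QX (gen_series b)"
    using QX_if_periodic in_QX_imp_algebraic_over_QX eventually_periodic_if_algebraic_over_QX[OF fin]
    by blast+
  then show ?thesis
    unfolding transcendental_over_QX_def
    using gen_series_eq_quotient_if_eventually_periodic by blast
qed

end
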